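(* Let $\mathcal{X}$ be a connected $n$-premaniplex and let $(\mathcal{Y},\eta)$ be an $(n,m)$-voltage operator that preserves connectivity. Let $\gamma\in\operatorname{Aut}(\mathcal{X}\rtimes_\eta\mathcal{Y})$. If there exist a flag $(x_0,y_0)$ and a flag $x_1\in\mathcal{X}$ with $(x_0,y_0)\gamma=(x_1,y_0)$, then there is $\alpha\in\operatorname{Aut}(\mathcal{X})$ such that $(x,y)\gamma=(x\alpha,y)$ for all flags $(x,y)$ of $\mathcal{X}\rtimes_\eta\mathcal{Y}$.
   Context: An $n$-premaniplex is an edge-coloured graph (semi-edges and parallel edges allowed) with colours $\{0,\dots,n-1\}$ such that every vertex (flag) is the start of exactly one dart of each colour, and for $|i-j|\ge2$ alternating $i,j$-paths of length 4 are closed; $x^i$ is the $i$-adjacent flag of $x$. $\mathcal{C}^n=\langle r_0,\dots,r_{n-1}\mid r_i^2,\ (r_ir_j)^2\ (|i-j|\ge2)\rangle$ acts on flags by $r_ix=x^i$. Automorphisms (colour-preserving graph automorphisms) act on the right and commute with this action. For a flag $y$ of an $m$-premaniplex $\mathcal{Y}$ and $\omega\in\mathcal{C}^m$, $W_\omega(y)$ is the homotopy class of paths from $y$ whose colour sequence $i_1,\dots,i_k$ satisfies $r_{i_k}\cdots r_{i_1}=\omega$; these form the fundamental groupoid $\Pi(\mathcal{Y})$. A voltage assignment $\eta:\Pi(\mathcal{Y})\to\mathcal{C}^n$ satisfies $\eta(W_1W_2)=\eta(W_2)\eta(W_1)$; $(\mathcal{Y},\eta)$ is an $(n,m)$-voltage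 operator. $\mathcal{X}\rtimes_\eta\mathcal{Y}$ has flags $\mathcal{X}\times\mathcal{Y}$ and $(x,y)^i=(\eta(W_{r_i}(y))x,r_iy)$, $i\in\{0,\dots,m-1\}$; hence $\omega(x,y)=(\eta(W_\omega(y))x,\omega y)$. The operator preserves connectivity if $\mathcal{X}\rtimes_\eta\mathcal{Y}$ is connected whenever $\mathcal{X}$ is. Standing convention: $\mathcal{Y}$ has a spanning tree all of whose darts have trivial voltage. *)

theory Defs
  imports Main
begin

text \<open>Flags of a premaniplex: a carrier set F together with the adjacency
  function adj, where adj i x is the i-adjacent flag x^i (semi-edges: adj i x = x).\<close>

definition premaniplex :: "nat \<Rightarrow> 'f set \<Rightarrow> (nat \<Rightarrow> 'f \<Rightarrow> 'f) \<Rightarrow> bool" where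
  "premaniplex n F adj \<longleftrightarrow>
     (\<forall>i<n. \<forall>x\<in>F. adj i x \<in> F \<and> adj i (adj i x) = x) \<and>
     (\<forall>i<n. \<forall>j<n. \<forall>x\<in>F. (i + 2 \<le> j \<or> j + 2 \<le> i) \<longrightarrow> adj i (adj j x) = adj j (adj i x))"

text \<open>A word [i1,...,ik] (the colour sequence of a path) represents r_ik ... r_i1;
  it acts by applying i1 first.\<close>

definition act :: "(nat \<Rightarrow> 'f \<Rightarrow> 'f) \<Rightarrow> nat list \<Rightarrow> 'f \<Rightarrow> 'f" where
  "act adj w x = fold (\<lambda>i z. adj i z) w x"

inductive cox_step :: "nat list \<Rightarrow> nat list \<Rightarrow> bool" where
  del: "cox_step (u @ [i, i] @ v) (u @ v)"
| swap: "i + 2 \<le> j \<or> j + 2 \<le> i \<Longrightarrow> cox_step (u @ [i, j] @ v) (u @ [j, i] @ v)"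

text \<open>Equality in the group C^n = <r_i | r_i^2, (r_i r_j)^2 (|i-j|>=2)> of the
  elements represented by two words (equivalence closure of the rewriting steps).\<close>

definition cox_eq :: "nat list \<Rightarrow> nat list \<Rightarrow> bool" where
  "cox_eq = (sup cox_step cox_step\<inverse>\<inverse>)\<^sup>*\<^sup>*"

definition connected_pm :: "nat \<Rightarrow> 'f set \<Rightarrow> (nat \<Rightarrow> 'f \<Rightarrow> 'f) \<Rightarrow> bool" where
  "connected_pm n F adj \<longleftrightarrow>
     (\<forall>a\<in>F. \<forall>b\<in>F. \<exists>w. set w \<subseteq> {..<n} \<and> act adj w a = b)"

definition is_aut :: "nat \<Rightarrow> 'f set \<Rightarrow> (nat \<Rightarrow> 'f \<Rightarrow> 'f) \<Rightarrow> ('f \<Rightarrow> 'f) \<Rightarrow> bool" where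
  "is_aut n F adj g \<longleftrightarrow> bij_betw g F F \<and> (\<forall>i<n. \<forall>x\<in>F. g (adj i x) = adj i (g x))"

text \<open>Voltage assignment: eta y w is (a word representing) the voltage of the
  homotopy class W_omega(y), where w is any word over {0..m-1} representing omega.\<close>

definition voltage_operator ::
  "nat \<Rightarrow> nat \<Rightarrow> 'y set \<Rightarrow> (nat \<Rightarrow> 'y \<Rightarrow> 'y) \<Rightarrow> ('y \<Rightarrow> nat list \<Rightarrow> nat list) \<Rightarrow> bool" where
  "voltage_operator n m FY adjY eta \<longleftrightarrow>
     premaniplex m FY adjY \<and>
     (\<forall>y\<in>FY. \<forall>w. set w \<subseteq> {..<m} \<longrightarrow> set (eta y w) \<subseteq> {..<n}) \<and>
     (\<forall>y\<in>FY. \<forall>w w'. set w \<subseteq> {..<m} \<longrightarrow> set w' \<subseteq> {..<m} \<longrightarrow> cox_eq w w'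
         \<longrightarrow> cox_eq (eta y w) (eta y w')) \<and>
     (\<forall>y\<in>FY. \<forall>w1 w2. set w1 \<subseteq> {..<m} \<longrightarrow> set w2 \<subseteq> {..<m} \<longrightarrow>
         cox_eq (eta y (w1 @ w2)) (eta y w1 @ eta (act adjY w1 y) w2))"

fun walk_in :: "('y \<times> nat) set \<Rightarrow> (nat \<Rightarrow> 'y \<Rightarrow> 'y) \<Rightarrow> 'y \<Rightarrow> nat list \<Rightarrow> bool" where
  "walk_in T adj y [] = True"
| "walk_in T adj y (i # w) = ((y, i) \<in> T \<and> walk_in T adj (adj i y) w)"

definition reduced_word :: "nat list \<Rightarrow> bool" where
  "reduced_word w \<longleftrightarrow> (\<forall>k. Suc k < length w \<longrightarrow> w ! k \<noteq> w ! Suc k)"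

text \<open>Standing convention: a spanning tree (set of darts T, closed under reversal,
  without semi-edges, connected, with no closed non-backtracking walk) all of
  whose darts have trivial voltage.\<close>

definition trivial_spanning_tree ::
  "nat \<Rightarrow> 'y set \<Rightarrow> (nat \<Rightarrow> 'y \<Rightarrow> 'y) \<Rightarrow> ('y \<Rightarrow> nat list \<Rightarrow> nat list) \<Rightarrow> bool" where
  "trivial_spanning_tree m FY adjY eta \<longleftrightarrow>
     (\<exists>T. T \<subseteq> {(y, i). y \<in> FY \<and> i < m} \<and>
        (\<forall>(y, i)\<in>T. (adjY i y, i) \<in> T \<and> adjY i y \<noteq> y \<and> cox_eq (eta y [i]) []) \<and>
        (\<forall>y\<in>FY. \<forall>y'\<in>FY. \<exists>w. walk_in T adjY y w \<and> act adjY w y = y') \<and>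
        (\<forall>y\<in>FY. \<forall>w. w \<noteq> [] \<and> reduced_word w \<and> walk_in T adjY y w \<longrightarrow> act adjY w y \<noteq> y))"

definition vprod_adj ::
  "(nat \<Rightarrow> 'x \<Rightarrow> 'x) \<Rightarrow> (nat \<Rightarrow> 'y \<Rightarrow> 'y) \<Rightarrow> ('y \<Rightarrow> nat list \<Rightarrow> nat list)
    \<Rightarrow> nat \<Rightarrow> 'x \<times> 'y \<Rightarrow> 'x \<times> 'y" where
  "vprod_adj adjX adjY eta i p = (act adjX (eta (snd p) [i]) (fst p), adjY i (snd p))"

text \<open>Preservation of connectivity. Connected premaniplexes are countable, so it
  suffices to quantify over premaniplexes whose flags are natural numbers.\<close>

definition preserves_connectivity ::
  "nat \<Rightarrow> nat \<Rightarrow> 'y set \<Rightarrow> (nat \<Rightarrow> 'y \<Rightarrow> 'y) \<Rightarrow> ('y \<Rightarrow> nat list \<Rightarrow> nat list) \<Rightarrow> bool" where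
  "preserves_connectivity n m FY adjY eta \<longleftrightarrow>
     (\<forall>(F :: nat set) adj. premaniplex n F adj \<and> connected_pm n F adj
        \<longrightarrow> connected_pm m (F \<times> FY) (vprod_adj adj adjY eta))"

end

theory Submission
  imports Defs "HOL-Library.Countable_Set"
begin

text \<open>A path in \<open>\<X> \<rtimes>\<^sub>\<eta> \<Y>\<close> from \<open>(x, y\<^sub>0)\<close> is a walk in \<open>\<Y>\<close> together with the action of its
  voltage on \<open>x\<close>, and \<open>\<gamma>\<close> commutes with following paths. Since \<open>\<X> \<rtimes>\<^sub>\<eta> \<Y>\<close> is connected, every
  \<open>(x, y\<^sub>0)\<close> is reached from \<open>(x\<^sub>0, y\<^sub>0)\<close> along a closed walk at \<open>y\<^sub>0\<close>, so \<open>\<gamma>\<close> maps the fibre over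
  \<open>y\<^sub>0\<close> to itself, say by \<open>\<alpha>\<close>. Walks in the spanning tree have trivial voltage, which
  transports this to every fibre: \<open>(x, y)\<gamma> = (x\<alpha>, y)\<close>. Finally, applying connectivity
  preservation to the diagonal premaniplex on \<open>\<X> \<times> \<X>\<close> gives one closed walk at \<open>y\<^sub>0\<close> whose
  voltage acts as \<open>r\<^sub>i\<close> on both \<open>x\<close> and \<open>x\<alpha>\<close>; following it shows \<open>(x\<^sup>i)\<alpha> = (x\<alpha>)\<^sup>i\<close>.\<close>

lemma act_Nil [simp]: "act adj [] x = x"
  by (simp add: act_def)

lemma act_Cons [simp]: "act adj (i # w) x = act adj w (adj i x)"
  by (simp add: act_def)

lemma act_append [simp]: "act adj (u @ v) x = act adj v (act adj u x)"
  by (simp add: act_def)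

lemma premaniplex_adj_closed: "premaniplex n F adj \<Longrightarrow> i < n \<Longrightarrow> x \<in> F \<Longrightarrow> adj i x \<in> F"
  by (simp add: premaniplex_def)

lemma premaniplex_adj_adj: "premaniplex n F adj \<Longrightarrow> i < n \<Longrightarrow> x \<in> F \<Longrightarrow> adj i (adj i x) = x"
  by (simp add: premaniplex_def)

lemma premaniplex_adj_commute:
  "premaniplex n F adj \<Longrightarrow> i < n \<Longrightarrow> j < n \<Longrightarrow> x \<in> F \<Longrightarrow> i + 2 \<le> j \<or> j + 2 \<le> i
    \<Longrightarrow> adj i (adj j x) = adj j (adj i x)"
  unfolding premaniplex_def by blast

lemma premaniplex_act_closed:
  "premaniplex n F adj \<Longrightarrow> set w \<subseteq> {..<n} \<Longrightarrow> x \<in> F \<Longrightarrow> act adj w x \<in> F"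
  by (induction w arbitrary: x) (auto intro: premaniplex_adj_closed)

lemma premaniplex_act_rev:
  "premaniplex n F adj \<Longrightarrow> set w \<subseteq> {..<n} \<Longrightarrow> x \<in> F \<Longrightarrow> act adj (rev w) (act adj w x) = x"
  by (induction w arbitrary: x) (auto simp: premaniplex_adj_closed premaniplex_adj_adj)

text \<open>Letters \<open>\<ge> n\<close> are discarded: the relations of \<open>C\<^sup>n\<close> only hold for the colours of the
  premaniplex.\<close>

lemma cox_step_act_filter:
  assumes pm: "premaniplex n F adj" and "cox_step u v" and x: "x \<in> F"
  shows "act adj (filter (\<lambda>i. i < n) u) x = act adj (filter (\<lambda>i. i < n) v) x"
  using \<open>cox_step u v\<close>
proof cases
  case (del u' i v')
  have "act adj (filter (\<lambda>i. i < n) u') x \<in> F"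
    by (rule premaniplex_act_closed[OF pm _ x]) auto
  with del show ?thesis by (auto simp: premaniplex_adj_adj[OF pm])
next
  case (swap i j u' v')
  have "act adj (filter (\<lambda>i. i < n) u') x \<in> F"
    by (rule premaniplex_act_closed[OF pm _ x]) auto
  with swap show ?thesis by (auto simp: premaniplex_adj_commute[OF pm])
qed

lemma cox_eq_act_filter:
  assumes "premaniplex n F adj" and "cox_eq u v" and "x \<in> F"
  shows "act adj (filter (\<lambda>i. i < n) u) x = act adj (filter (\<lambda>i. i < n) v) x"
  using \<open>cox_eq u v\<close> unfolding cox_eq_def
proof (induction rule: rtranclp_induct)
  case (step v w)
  then show ?case using cox_step_act_filter[OF assms(1) _ assms(3)] by auto
qed simp

lemma cox_eq_Nil_act:
  assumes "premaniplex n F adj" and "cox_eq w []" and "set w \<subseteq> {..<n}" and "x \<in> F"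
  shows "act adj w x = x"
proof -
  have "filter (\<lambda>i. i < n) w = w" using assms(3) by (auto simp: filter_id_conv)
  then show ?thesis using cox_eq_act_filter[OF assms(1,2,4)] by simp
qed

definition flag_orbit :: "nat \<Rightarrow> (nat \<Rightarrow> 'f \<Rightarrow> 'f) \<Rightarrow> 'f \<Rightarrow> 'f set" where
  "flag_orbit n adj p = (\<lambda>w. act adj w p) ` {w. set w \<subseteq> {..<n}}"

lemma act_in_flag_orbit: "set w \<subseteq> {..<n} \<Longrightarrow> act adj w p \<in> flag_orbit n adj p"
  unfolding flag_orbit_def by blast

lemma in_flag_orbit_self: "p \<in> flag_orbit n adj p"
  using act_in_flag_orbit[of "[]"] by simp

lemma countable_flag_orbit: "countable (flag_orbit n adj p)"
proof -
  have "flag_orbit n adj p = (\<lambda>w. act adj w p) ` lists {..<n}"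
    by (simp add: flag_orbit_def lists_eq_set)
  then show ?thesis by simp
qed

lemma flag_orbit_subset: "premaniplex n F adj \<Longrightarrow> p \<in> F \<Longrightarrow> flag_orbit n adj p \<subseteq> F"
  by (auto simp: flag_orbit_def premaniplex_act_closed)

lemma premaniplex_flag_orbit:
  assumes pm: "premaniplex n F adj" and "p \<in> F"
  shows "premaniplex n (flag_orbit n adj p) adj"
proof -
  note sub = flag_orbit_subset[OF pm \<open>p \<in> F\<close>]
  have "adj i q \<in> flag_orbit n adj p" if "i < n" "q \<in> flag_orbit n adj p" for i q
  proof -
    obtain w where "set w \<subseteq> {..<n}" "q = act adj w p"
      using \<open>q \<in> flag_orbit n adj p\<close> by (auto simp: flag_orbit_def)
    then show ?thesis using act_in_flag_orbit[of "w @ [i]" n adj p] \<open>i < n\<close> by auto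
  qed
  with sub pm show ?thesis by (auto simp: premaniplex_def subset_iff)
qed

lemma connected_flag_orbit:
  assumes pm: "premaniplex n F adj" and "p \<in> F"
  shows "connected_pm n (flag_orbit n adj p) adj"
  unfolding connected_pm_def
proof (intro ballI)
  fix a b assume "a \<in> flag_orbit n adj p" "b \<in> flag_orbit n adj p"
  then obtain u v where "set u \<subseteq> {..<n}" "a = act adj u p" "set v \<subseteq> {..<n}" "b = act adj v p"
    by (auto simp: flag_orbit_def)
  then show "\<exists>w. set w \<subseteq> {..<n} \<and> act adj w a = b"
    using premaniplex_act_rev[OF pm _ \<open>p \<in> F\<close>] by (intro exI[of _ "rev u @ v"]) auto
qed

lemma connected_pm_eq_flag_orbit:
  assumes "premaniplex n F adj" and "connected_pm n F adj" and "p \<in> F"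
  shows "F = flag_orbit n adj p"
proof
  show "F \<subseteq> flag_orbit n adj p"
  proof
    fix q assume "q \<in> F"
    then obtain w where "set w \<subseteq> {..<n}" "q = act adj w p"
      using assms(2,3) unfolding connected_pm_def by metis
    then show "q \<in> flag_orbit n adj p" by (simp add: act_in_flag_orbit)
  qed
  show "flag_orbit n adj p \<subseteq> F" by (rule flag_orbit_subset[OF assms(1,3)])
qed

definition transport_adj :: "('f \<Rightarrow> 'g) \<Rightarrow> 'f set \<Rightarrow> (nat \<Rightarrow> 'f \<Rightarrow> 'f) \<Rightarrow> nat \<Rightarrow> 'g \<Rightarrow> 'g" where
  "transport_adj h F adj i z = h (adj i (inv_into F h z))"

lemma act_transport_adj:
  assumes "inj_on h F" and "premaniplex n F adj" and "set w \<subseteq> {..<n}" and "x \<in> F"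
  shows "act (transport_adj h F adj) w (h x) = h (act adj w x)"
  using assms(3,4)
  by (induction w arbitrary: x)
    (auto simp: transport_adj_def assms(1) premaniplex_adj_closed[OF assms(2)])

lemma premaniplex_transport_adj:
  assumes "inj_on h F" and "premaniplex n F adj"
  shows "premaniplex n (h ` F) (transport_adj h F adj)"
  using assms unfolding premaniplex_def
  by (auto simp: transport_adj_def)

lemma connected_pm_transport_adj:
  assumes "inj_on h F" and "premaniplex n F adj" and "connected_pm n F adj"
  shows "connected_pm n (h ` F) (transport_adj h F adj)"
  unfolding connected_pm_def
proof (intro ballI)
  fix a b assume "a \<in> h ` F" "b \<in> h ` F"
  then obtain x y where xy: "x \<in> F" "y \<in> F" "a = h x" "b = h y" by blast
  then obtain w where "set w \<subseteq> {..<n}" "act adj w x = y"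
    using assms(3) unfolding connected_pm_def by blast
  then show "\<exists>w. set w \<subseteq> {..<n} \<and> act (transport_adj h F adj) w a = b"
    using act_transport_adj[OF assms(1,2)] xy by auto
qed

definition diag_adj :: "(nat \<Rightarrow> 'f \<Rightarrow> 'f) \<Rightarrow> nat \<Rightarrow> 'f \<times> 'f \<Rightarrow> 'f \<times> 'f" where
  "diag_adj adj i = map_prod (adj i) (adj i)"

lemma act_diag_adj: "act (diag_adj adj) w (a, b) = (act adj w a, act adj w b)"
  by (induction w arbitrary: a b) (simp_all add: diag_adj_def)

lemma premaniplex_diag_adj: "premaniplex n F adj \<Longrightarrow> premaniplex n (F \<times> F) (diag_adj adj)"
  unfolding premaniplex_def diag_adj_def by auto

lemma aut_act:
  assumes aut: "is_aut n F adj g" and closed: "\<And>i x. i < n \<Longrightarrow> x \<in> F \<Longrightarrow> adj i x \<in> F"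
    and "set w \<subseteq> {..<n}" and "x \<in> F"
  shows "g (act adj w x) = act adj w (g x)"
  using assms(3,4)
proof (induction w arbitrary: x)
  case (Cons i w)
  have "g x \<in> F" using aut Cons.prems(2) by (auto simp: is_aut_def bij_betw_apply)
  then show ?case using Cons aut closed by (simp add: is_aut_def)
qed simp

lemma bij_betw_fibrewise:
  assumes bij: "bij_betw \<gamma> (A \<times> B) (A \<times> B)"
    and fibrewise: "\<And>x y. x \<in> A \<Longrightarrow> y \<in> B \<Longrightarrow> \<gamma> (x, y) = (\<alpha> x, y)" and "b \<in> B"
  shows "bij_betw \<alpha> A A"
proof -
  have "inj_on \<alpha> A"
  proof (rule inj_onI)
    fix x x' assume "x \<in> A" "x' \<in> A" "\<alpha> x = \<alpha> x'"
    then have "\<gamma> (x, b) = \<gamma> (x', b)" using fibrewise \<open>b \<in> B\<close> by simp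
    then show "x = x'"
      using bij_betw_imp_inj_on[OF bij] \<open>x \<in> A\<close> \<open>x' \<in> A\<close> \<open>b \<in> B\<close> by (auto dest: inj_onD)
  qed
  moreover have "\<alpha> ` A = A"
  proof
    show "\<alpha> ` A \<subseteq> A"
    proof (rule image_subsetI)
      fix x assume "x \<in> A"
      then have "\<gamma> (x, b) \<in> A \<times> B" using bij_betw_apply[OF bij] \<open>b \<in> B\<close> by blast
      then show "\<alpha> x \<in> A" using fibrewise[OF \<open>x \<in> A\<close> \<open>b \<in> B\<close>] by simp
    qed
    show "A \<subseteq> \<alpha> ` A"
    proof
      fix z assume "z \<in> A"
      then have "(z, b) \<in> \<gamma> ` (A \<times> B)"
        using bij_betw_imp_surj_on[OF bij] \<open>b \<in> B\<close> by simp
      then obtain x y where "x \<in> A" "y \<in> B" "\<gamma> (x, y) = (z, b)" by auto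
      then show "z \<in> \<alpha> ` A" using fibrewise by auto
    qed
  qed
  ultimately show ?thesis by (simp add: bij_betw_def)
qed

fun walk_voltage :: "(nat \<Rightarrow> 'y \<Rightarrow> 'y) \<Rightarrow> ('y \<Rightarrow> nat list \<Rightarrow> nat list) \<Rightarrow> 'y \<Rightarrow> nat list \<Rightarrow> nat list" where
  "walk_voltage adjY eta y [] = []"
| "walk_voltage adjY eta y (i # w) = eta y [i] @ walk_voltage adjY eta (adjY i y) w"

lemma act_vprod_adj:
  "act (vprod_adj adjX adjY eta) w (x, y) = (act adjX (walk_voltage adjY eta y w) x, act adjY w y)"
  by (induction w arbitrary: x y) (simp_all add: vprod_adj_def)

locale voltage_product =
  fixes n m :: nat
    and FX :: "'x set" and adjX :: "nat \<Rightarrow> 'x \<Rightarrow> 'x"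
    and FY :: "'y set" and adjY :: "nat \<Rightarrow> 'y \<Rightarrow> 'y"
    and eta :: "'y \<Rightarrow> nat list \<Rightarrow> nat list"
  assumes premaniplex_X: "premaniplex n FX adjX"
    and premaniplex_Y: "premaniplex m FY adjY"
    and dart_voltage_letters: "\<And>y i. y \<in> FY \<Longrightarrow> i < m \<Longrightarrow> set (eta y [i]) \<subseteq> {..<n}"

lemma voltage_product_if_voltage_operator:
  assumes "premaniplex n FX adjX" and "voltage_operator n m FY adjY eta"
  shows "voltage_product n m FX adjX FY adjY eta"
proof
  show "premaniplex n FX adjX" by (fact assms(1))
  show "premaniplex m FY adjY" using assms(2) by (simp add: voltage_operator_def)
  fix y i assume "y \<in> FY" and "i < m"
  then show "set (eta y [i]) \<subseteq> {..<n}"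
    using assms(2) unfolding voltage_operator_def by simp
qed

context voltage_product
begin

lemma walk_voltage_letters:
  "y \<in> FY \<Longrightarrow> set w \<subseteq> {..<m} \<Longrightarrow> set (walk_voltage adjY eta y w) \<subseteq> {..<n}"
  by (induction w arbitrary: y)
    (auto dest: dart_voltage_letters premaniplex_adj_closed[OF premaniplex_Y])

lemma vprod_adj_closed:
  assumes "i < m" and "p \<in> FX \<times> FY"
  shows "vprod_adj adjX adjY eta i p \<in> FX \<times> FY"
proof -
  obtain x y where "p = (x, y)" "x \<in> FX" "y \<in> FY" using assms(2) by blast
  then show ?thesis
    using premaniplex_act_closed[OF premaniplex_X dart_voltage_letters]
      premaniplex_adj_closed[OF premaniplex_Y] \<open>i < m\<close>
    by (simp add: vprod_adj_def)
qed

lemma aut_act_vprod: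
  assumes "is_aut m (FX \<times> FY) (vprod_adj adjX adjY eta) \<gamma>"
    and "set w \<subseteq> {..<m}" and "p \<in> FX \<times> FY"
  shows "\<gamma> (act (vprod_adj adjX adjY eta) w p) = act (vprod_adj adjX adjY eta) w (\<gamma> p)"
  using aut_act[OF assms(1) vprod_adj_closed assms(2,3)] .

text \<open>The definition of \<open>preserves_connectivity\<close> only speaks about premaniplexes on \<open>nat\<close>;
  a connected premaniplex is countable, so it can be transported there.\<close>

lemma preserves_connectivityD:
  assumes pc: "preserves_connectivity n m FY adjY eta"
    and pm: "premaniplex n S adjS" and conn: "connected_pm n S adjS"
  shows "connected_pm m (S \<times> FY) (vprod_adj adjS adjY eta)"
proof -
  have "countable S"
  proof (cases "S = {}")
    case False
    then obtain s where "s \<in> S" by blast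
    then show ?thesis using connected_pm_eq_flag_orbit[OF pm conn] countable_flag_orbit by metis
  qed simp
  define h where "h = to_nat_on S"
  have inj: "inj_on h S" using \<open>countable S\<close> unfolding h_def by (rule inj_on_to_nat_on)
  let ?adj = "transport_adj h S adjS"
  have conn_nat: "connected_pm m (h ` S \<times> FY) (vprod_adj ?adj adjY eta)"
    using pc premaniplex_transport_adj[OF inj pm] connected_pm_transport_adj[OF inj pm conn]
    unfolding preserves_connectivity_def by blast
  show ?thesis unfolding connected_pm_def
  proof (intro ballI)
    fix p q assume "p \<in> S \<times> FY" "q \<in> S \<times> FY"
    then obtain s y t y' where st: "s \<in> S" "y \<in> FY" "t \<in> S" "y' \<in> FY"
      and pq: "p = (s, y)" "q = (t, y')" by auto
    then obtain w where w: "set w \<subseteq> {..<m}"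
      "act (vprod_adj ?adj adjY eta) w (h s, y) = (h t, y')"
      using conn_nat unfolding connected_pm_def by blast
    let ?v = "walk_voltage adjY eta y w"
    have "h (act adjS ?v s) = h t" "act adjY w y = y'"
      using w act_transport_adj[OF inj pm walk_voltage_letters[OF st(2) w(1)] st(1)]
      by (simp_all add: act_vprod_adj)
    moreover have "act adjS ?v s \<in> S"
      using premaniplex_act_closed[OF pm walk_voltage_letters[OF st(2) w(1)] st(1)] .
    ultimately have "act adjS ?v s = t" using inj st(3) by (auto dest: inj_onD)
    then show "\<exists>w. set w \<subseteq> {..<m} \<and> act (vprod_adj adjS adjY eta) w p = q"
      using w(1) pq \<open>act adjY w y = y'\<close> by (auto simp: act_vprod_adj)
  qed
qed

lemma closed_walk_realizing_pair:
  assumes pc: "preserves_connectivity n m FY adjY eta" and "y0 \<in> FY"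
    and "a \<in> FX" and "b \<in> FX" and "set v \<subseteq> {..<n}"
  obtains w where "set w \<subseteq> {..<m}" and "act adjY w y0 = y0"
    and "act adjX (walk_voltage adjY eta y0 w) a = act adjX v a"
    and "act adjX (walk_voltage adjY eta y0 w) b = act adjX v b"
proof -
  let ?S = "flag_orbit n (diag_adj adjX) (a, b)"
  have ab: "(a, b) \<in> FX \<times> FX" using assms(3,4) by simp
  have "connected_pm m (?S \<times> FY) (vprod_adj (diag_adj adjX) adjY eta)"
    using preserves_connectivityD[OF pc] premaniplex_diag_adj[OF premaniplex_X]
      premaniplex_flag_orbit[OF _ ab] connected_flag_orbit[OF _ ab] by blast
  moreover have "(act adjX v a, act adjX v b) \<in> ?S"
    using act_in_flag_orbit[OF assms(5)] by (metis act_diag_adj)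
  ultimately obtain w where "set w \<subseteq> {..<m}"
    "act (vprod_adj (diag_adj adjX) adjY eta) w ((a, b), y0) = ((act adjX v a, act adjX v b), y0)"
    using in_flag_orbit_self \<open>y0 \<in> FY\<close> unfolding connected_pm_def
    by (metis mem_Sigma_iff)
  then show ?thesis using that by (simp add: act_vprod_adj act_diag_adj)
qed

lemma tree_walk_voltage_trivial:
  assumes T: "T \<subseteq> {(y, i). y \<in> FY \<and> i < m}"
    and T_trivial: "\<forall>(y, i)\<in>T. cox_eq (eta y [i]) []" and "walk_in T adjY y w"
  shows "set w \<subseteq> {..<m} \<and> (\<forall>x\<in>FX. act adjX (walk_voltage adjY eta y w) x = x)"
  using \<open>walk_in T adjY y w\<close>
proof (induction w arbitrary: y)
  case (Cons i w)
  then have "(y, i) \<in> T" and walk: "walk_in T adjY (adjY i y) w" by simp_all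
  then have "y \<in> FY" "i < m" using T by auto
  have "act adjX (eta y [i]) x = x" if "x \<in> FX" for x
    using cox_eq_Nil_act[OF premaniplex_X _ dart_voltage_letters that] T_trivial
      \<open>(y, i) \<in> T\<close> \<open>y \<in> FY\<close> \<open>i < m\<close> by blast
  then show ?case using Cons.IH[OF walk] \<open>i < m\<close> by simp
qed simp

lemma aut_preserves_fibre:
  assumes pc: "preserves_connectivity n m FY adjY eta" and conn: "connected_pm n FX adjX"
    and aut: "is_aut m (FX \<times> FY) (vprod_adj adjX adjY eta) \<gamma>"
    and "x0 \<in> FX" "y0 \<in> FY" "\<gamma> (x0, y0) = (x1, y0)" and "x \<in> FX"
  shows "snd (\<gamma> (x, y0)) = y0"
proof -
  obtain w where w: "set w \<subseteq> {..<m}" "act (vprod_adj adjX adjY eta) w (x0, y0) = (x, y0)"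
    using preserves_connectivityD[OF pc premaniplex_X conn] assms(4,5,7)
    unfolding connected_pm_def by blast
  then have "\<gamma> (x, y0) = act (vprod_adj adjX adjY eta) w (x1, y0)"
    using aut_act_vprod[OF aut w(1), of "(x0, y0)"] assms(4-6) by simp
  then show ?thesis using w(2) by (simp add: act_vprod_adj)
qed

lemma aut_fibrewise:
  assumes aut: "is_aut m (FX \<times> FY) (vprod_adj adjX adjY eta) \<gamma>"
    and tree: "trivial_spanning_tree m FY adjY eta" and "y0 \<in> FY"
    and fibre: "\<And>x. x \<in> FX \<Longrightarrow> snd (\<gamma> (x, y0)) = y0" and "x \<in> FX" and "y \<in> FY"
  shows "\<gamma> (x, y) = (fst (\<gamma> (x, y0)), y)"
proof -
  obtain T where T: "T \<subseteq> {(y, i). y \<in> FY \<and> i < m}"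
    "\<forall>(y, i)\<in>T. (adjY i y, i) \<in> T \<and> adjY i y \<noteq> y \<and> cox_eq (eta y [i]) []"
    "\<forall>y\<in>FY. \<forall>y'\<in>FY. \<exists>w. walk_in T adjY y w \<and> act adjY w y = y'"
    using tree unfolding trivial_spanning_tree_def by (elim exE conjE) (rule that)
  have "\<forall>(y, i)\<in>T. cox_eq (eta y [i]) []" using T(2) by fast
  moreover obtain w where w: "walk_in T adjY y0 w" "act adjY w y0 = y"
    using T(3) \<open>y0 \<in> FY\<close> \<open>y \<in> FY\<close> by blast
  ultimately have w_letters: "set w \<subseteq> {..<m}"
    and trivial: "\<And>x. x \<in> FX \<Longrightarrow> act adjX (walk_voltage adjY eta y0 w) x = x"
    using tree_walk_voltage_trivial[OF T(1)] by blast+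
  have "\<gamma> (x, y0) \<in> FX \<times> FY"
    using aut \<open>x \<in> FX\<close> \<open>y0 \<in> FY\<close> by (auto simp: is_aut_def bij_betw_apply)
  then obtain x' where "x' \<in> FX" and \<gamma>x: "\<gamma> (x, y0) = (x', y0)"
    using fibre[OF \<open>x \<in> FX\<close>] by (cases "\<gamma> (x, y0)") auto
  have "(x, y) = act (vprod_adj adjX adjY eta) w (x, y0)"
    using w(2) trivial[OF \<open>x \<in> FX\<close>] by (simp add: act_vprod_adj)
  then have "\<gamma> (x, y) = act (vprod_adj adjX adjY eta) w (x', y0)"
    using aut_act_vprod[OF aut w_letters, of "(x, y0)"] \<gamma>x \<open>x \<in> FX\<close> \<open>y0 \<in> FY\<close> by simp
  also have "\<dots> = (x', y)"
    using w(2) trivial[OF \<open>x' \<in> FX\<close>] by (simp add: act_vprod_adj)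
  finally show ?thesis using \<gamma>x by simp
qed

lemma aut_fibre_commutes:
  assumes pc: "preserves_connectivity n m FY adjY eta"
    and aut: "is_aut m (FX \<times> FY) (vprod_adj adjX adjY eta) \<gamma>" and "y0 \<in> FY"
    and fibre: "\<And>x. x \<in> FX \<Longrightarrow> snd (\<gamma> (x, y0)) = y0" and "i < n" and "x \<in> FX"
  shows "fst (\<gamma> (adjX i x, y0)) = adjX i (fst (\<gamma> (x, y0)))"
proof -
  have "\<gamma> (x, y0) \<in> FX \<times> FY"
    using aut \<open>x \<in> FX\<close> \<open>y0 \<in> FY\<close> by (auto simp: is_aut_def bij_betw_apply)
  then obtain x' where "x' \<in> FX" and \<gamma>x: "\<gamma> (x, y0) = (x', y0)"
    using fibre[OF \<open>x \<in> FX\<close>] by (cases "\<gamma> (x, y0)") auto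
  obtain w where w: "set w \<subseteq> {..<m}" "act adjY w y0 = y0"
    "act adjX (walk_voltage adjY eta y0 w) x = adjX i x"
    "act adjX (walk_voltage adjY eta y0 w) x' = adjX i x'"
    using closed_walk_realizing_pair[OF pc \<open>y0 \<in> FY\<close> \<open>x \<in> FX\<close> \<open>x' \<in> FX\<close>, of "[i]"] \<open>i < n\<close>
    by auto
  have "(adjX i x, y0) = act (vprod_adj adjX adjY eta) w (x, y0)"
    using w(2,3) by (simp add: act_vprod_adj)
  then have "\<gamma> (adjX i x, y0) = act (vprod_adj adjX adjY eta) w (x', y0)"
    using aut_act_vprod[OF aut w(1), of "(x, y0)"] \<gamma>x \<open>x \<in> FX\<close> \<open>y0 \<in> FY\<close> by simp
  also have "\<dots> = (adjX i x', y0)"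
    using w(2,4) by (simp add: act_vprod_adj)
  finally show ?thesis using \<gamma>x by simp
qed

end

theorem proposition4p2:
  fixes n m :: nat
    and FX :: "'x set" and adjX :: "nat \<Rightarrow> 'x \<Rightarrow> 'x"
    and FY :: "'y set" and adjY :: "nat \<Rightarrow> 'y \<Rightarrow> 'y"
    and eta :: "'y \<Rightarrow> nat list \<Rightarrow> nat list"
    and \<gamma> :: "'x \<times> 'y \<Rightarrow> 'x \<times> 'y"
  assumes "premaniplex n FX adjX" and "connected_pm n FX adjX"
    and "voltage_operator n m FY adjY eta"
    and "trivial_spanning_tree m FY adjY eta"
    and "preserves_connectivity n m FY adjY eta"
    and "is_aut m (FX \<times> FY) (vprod_adj adjX adjY eta) \<gamma>"
    and "x0 \<in> FX" and "y0 \<in> FY" and "x1 \<in> FX"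
    and "\<gamma> (x0, y0) = (x1, y0)"
  shows "\<exists>\<alpha>. is_aut n FX adjX \<alpha> \<and> (\<forall>x\<in>FX. \<forall>y\<in>FY. \<gamma> (x, y) = (\<alpha> x, y))"
proof -
  interpret voltage_product n m FX adjX FY adjY eta
    using voltage_product_if_voltage_operator[OF assms(1,3)] .
  define \<alpha> where "\<alpha> x = fst (\<gamma> (x, y0))" for x
  have fibre: "snd (\<gamma> (x, y0)) = y0" if "x \<in> FX" for x
    using aut_preserves_fibre[OF assms(5,2,6,7,8,10) that] .
  have fibrewise: "\<forall>x\<in>FX. \<forall>y\<in>FY. \<gamma> (x, y) = (\<alpha> x, y)"
    using aut_fibrewise[OF assms(6,4,8) fibre] by (simp add: \<alpha>_def)
  have "bij_betw \<gamma> (FX \<times> FY) (FX \<times> FY)" using assms(6) by (simp add: is_aut_def)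
  then have "bij_betw \<alpha> FX FX"
    using bij_betw_fibrewise[OF _ _ assms(8)] fibrewise by blast
  moreover have "\<forall>i<n. \<forall>x\<in>FX. \<alpha> (adjX i x) = adjX i (\<alpha> x)"
    unfolding \<alpha>_def using aut_fibre_commutes[OF assms(5,6,8) fibre] by blast
  ultimately show ?thesis using fibrewise unfolding is_aut_def by blast
qed

end
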